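(* Let $s\ge2$, $k\ge1$ and $s_0$ be integers with $0\le s_0<\min\{k,s\}$. Let $n=sk+s_0$, $d_c=\lfloor n/s\rfloor=k$, $d_o=\lfloor(n-1)/(s-1)\rfloor$, and let $$g(s,k,s_0)=\frac{\gamma_{cc}}{\gamma_{MBR,o}},\qquad \gamma_{MBR,o}=\frac{2d_oM}{2kd_o-k^2+k},$$ where $\gamma_{cc}$ is the repair bandwidth of the Cubic Code for the Fixed Cluster Repair System with parameters $(n,k,s)$ storing a file of size $M$. Then $$g(s,k,s_0)\le\frac{1}{2(1-e^{-1})}\cdot\frac{(s+3)k+s-3}{(s+1)k-1}.$$
   Context: FCRS with parameters $(n,k,s)$: $n=ds+s_0$ servers, $d=\lfloor n/s\rfloor$ (here $d=d_c=k$), clusters $1,\dots,s$ of size $d$ and cluster $s+1$ of size $s_0$; any $k$ servers recover the file; a failed server in cluster $r$ is repaired by downloading from all $d$ servers of a cluster $i\in[s]$, $i\ne r$. Cubic Code: encode $m$ file chunks (each of size $M/m$) with a $(d^{s+1},m)$ MDS code with symbols $C_b$ indexed by $b=b_{s+1}\cdots b_1$, $b_i\in[d]$; server $(i,j)$ stores $\{C_b:b_i=j\}$; to repair $(r,\ell)$ from cluster $i$, server $(i,j)$ sends $\{C_b:b_i=j,b_r=\ell\}$; $m=\min\{d^{s+1}-\prod_{i=1}^{s+1}(d-k_i):k_i\ge0,\ \sum_i k_i=k,\ k_{s+1}\le s_0\}$. Thus $\gamma_{cc}=Md^s/m$. *)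

theory Defs
  imports Complex_Main
begin

text \<open>Cubic Code for FCRS with parameters (n,k,s), n = d s + s0, d = d_c = k.\<close>

definition cubic_m :: "nat \<Rightarrow> nat \<Rightarrow> nat \<Rightarrow> nat \<Rightarrow> nat" where
  "cubic_m d s k s0 = Min {d ^ (s+1) - (\<Prod>i\<in>{1..s+1}. (d - kk i)) | kk.
       (\<forall>i. i \<notin> {1..s+1} \<longrightarrow> kk i = 0) \<and> (\<Sum>i\<in>{1..s+1}. kk i) = k \<and> kk (s+1) \<le> s0}"

definition gamma_cc :: "real \<Rightarrow> nat \<Rightarrow> nat \<Rightarrow> nat \<Rightarrow> nat \<Rightarrow> real" where
  "gamma_cc M d s k s0 = M * real d ^ s / real (cubic_m d s k s0)"

definition gamma_MBR_o :: "real \<Rightarrow> nat \<Rightarrow> nat \<Rightarrow> real" where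
  "gamma_MBR_o M k d_o = 2 * real d_o * M / (2 * real k * real d_o - real k ^ 2 + real k)"

end

theory Submission
  imports Defs "HOL-Analysis.Convex"
begin

text \<open>For an admissible tuple with \<open>\<Sum> k_i = d\<close>, AM-GM bounds \<open>\<Prod> (d - k_i)\<close> by
  \<open>(d (1 - 1/(s+1)))^(s+1) \<le> d^(s+1)/e\<close>, so the MDS dimension of the Cubic Code is at
  least \<open>(1 - 1/e) d^(s+1)\<close> and \<open>\<gamma>_cc \<le> M/((1 - 1/e) d)\<close>. What remains is an
  elementary estimate of \<open>\<gamma>_MBR,o\<close>, using \<open>k \<le> d_o\<close> and \<open>d_o (s - 1) \<le> n - 1 \<le> (s + 1) k - 2\<close>.\<close>

lemma prod_le_mean_power:
  fixes x :: "'a \<Rightarrow> real"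
  assumes "finite S" and nonneg: "\<And>i. i \<in> S \<Longrightarrow> x i \<ge> 0"
  shows "(\<Prod>i\<in>S. x i) \<le> ((\<Sum>i\<in>S. x i) / card S) ^ card S"
proof (cases "S = {}")
  case False
  have card: "card S > 0" using assms False by (simp add: card_gt_0_iff)
  have "(\<Prod>i\<in>S. x i) = root (card S) (\<Prod>i\<in>S. x i) ^ card S"
    using card nonneg by (simp add: prod_nonneg real_root_pow_pos2)
  also have "\<dots> = ((\<Prod>i\<in>S. x i) powr (1 / card S)) ^ card S"
    using card nonneg by (simp add: prod_nonneg root_powr_inverse)
  also have "\<dots> \<le> ((\<Sum>i\<in>S. x i) / card S) ^ card S"
    using arith_geom_mean[OF \<open>finite S\<close> False nonneg]
    by (intro power_mono) (simp_all add: sum_divide_distrib)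
  finally show ?thesis .
qed simp

lemma prod_diff_le_exp:
  fixes a :: "'a \<Rightarrow> nat"
  assumes "finite I" "I \<noteq> {}" and sum_a: "(\<Sum>i\<in>I. a i) = d"
  shows "real (\<Prod>i\<in>I. d - a i) \<le> real d ^ card I * exp (-1)"
proof -
  define N where "N = card I"
  have N: "N > 0" using assms by (simp add: N_def card_gt_0_iff)
  have le_d: "a i \<le> d" if "i \<in> I" for i
    using member_le_sum[of i I a] that assms by simp
  have "(\<Sum>i\<in>I. real (d - a i)) = (\<Sum>i\<in>I. real d - real (a i))"
    by (intro sum.cong) (simp_all add: le_d of_nat_diff)
  also have "\<dots> = real d * (real N - 1)"
    using sum_a by (simp add: sum_subtractf N_def algebra_simps flip: of_nat_sum)
  finally have sum_diff: "(\<Sum>i\<in>I. real (d - a i)) = real d * (real N - 1)" .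
  have "real (\<Prod>i\<in>I. d - a i) \<le> (real d * (real N - 1) / N) ^ N"
    using prod_le_mean_power[of I "\<lambda>i. real (d - a i)"] assms sum_diff
    by (simp add: N_def)
  also have "\<dots> = real d ^ N * (1 - 1 / N) ^ N"
    using N by (simp add: field_simps flip: power_mult_distrib)
  also have "\<dots> \<le> real d ^ N * exp (-1)"
    using N exp_ge_one_minus_x_over_n_power_n[of 1 N] by (intro mult_left_mono) simp_all
  finally show ?thesis by (simp add: N_def)
qed

lemma cubic_m_lower_bound:
  assumes "s \<ge> 1"
  shows "real d ^ (s+1) * (1 - exp (-1)) \<le> real (cubic_m d s d s0)"
proof -
  let ?A = "{d ^ (s+1) - (\<Prod>i\<in>{1..s+1}. (d - kk i)) | kk.
       (\<forall>i. i \<notin> {1..s+1} \<longrightarrow> kk i = 0) \<and> (\<Sum>i\<in>{1..s+1}. kk i) = d \<and> kk (s+1) \<le> s0}"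
  have "finite ?A" by (rule finite_subset[of _ "{..d^(s+1)}"]) auto
  moreover have "?A \<noteq> {}"
  proof -
    define kk where "kk i = (if i = 1 then d else 0)" for i :: nat
    have "d ^ (s+1) - (\<Prod>i\<in>{1..s+1}. (d - kk i)) \<in> ?A"
      using assms by (intro CollectI exI[of _ kk]) (simp add: kk_def sum.delta)
    then show ?thesis by blast
  qed
  ultimately have "cubic_m d s d s0 \<in> ?A" unfolding cubic_m_def by (rule Min_in)
  then obtain kk where m: "cubic_m d s d s0 = d ^ (s+1) - (\<Prod>i\<in>{1..s+1}. (d - kk i))"
    and sum_kk: "(\<Sum>i\<in>{1..s+1}. kk i) = d" by blast
  have "(\<Prod>i\<in>{1..s+1}. (d - kk i)) \<le> (\<Prod>i\<in>{1..s+1::nat}. d)"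
    by (rule prod_mono) auto
  then have "real (cubic_m d s d s0) = real d ^ (s+1) - real (\<Prod>i\<in>{1..s+1}. (d - kk i))"
    unfolding m by (simp add: of_nat_diff)
  with prod_diff_le_exp[of "{1..s+1}" kk d] sum_kk show ?thesis
    by (simp add: algebra_simps)
qed

lemma d_o_bounds:
  fixes s k s0 :: nat
  assumes "s \<ge> 2" "s0 < k"
  defines "d_o \<equiv> (s * k + s0 - 1) div (s - 1)"
  shows "k \<le> d_o" and "d_o * (s - 1) + 2 \<le> (s + 1) * k"
proof -
  have "k * (s - 1) \<le> s * k + s0 - 1"
    using assms(1,2) by (simp add: algebra_simps diff_mult_distrib2)
  then show "k \<le> d_o" using assms(1) by (simp add: d_o_def less_eq_div_iff_mult_less_eq)
  have "d_o * (s - 1) \<le> s * k + s0 - 1"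
    unfolding d_o_def by (rule div_times_less_eq_dividend)
  moreover have "k \<le> s * k" using assms(1) by simp
  ultimately show "d_o * (s - 1) + 2 \<le> (s + 1) * k"
    using assms(2) by (simp only: add_mult_distrib mult_1_left)
qed

lemma gamma_ratio_eq:
  assumes "M \<noteq> 0"
  shows "gamma_cc M d s k s0 / gamma_MBR_o M d d_o
    = real d ^ (s+1) / real (cubic_m d s k s0) * ((2 * real d_o - real d + 1) / (2 * real d_o))"
proof -
  have "gamma_cc M d s k s0 / gamma_MBR_o M d d_o
      = M * real d ^ s / real (cubic_m d s k s0) * (real d * (2 * real d_o - real d + 1) / (2 * real d_o * M))"
    unfolding gamma_cc_def gamma_MBR_o_def by (simp add: power2_eq_square algebra_simps)
  also have "\<dots> = real d ^ (s+1) / real (cubic_m d s k s0) * ((2 * real d_o - real d + 1) / (2 * real d_o))"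
    using assms by (simp add: divide_simps)
  finally show ?thesis .
qed

lemma MBR_factor_le:
  fixes K D s :: real
  assumes "1 \<le> K" "K \<le> D" "s \<ge> 1" and D_bound: "D * (s - 1) + 2 \<le> (s + 1) * K"
  shows "(2 * D - K + 1) / D \<le> ((s + 3) * K + s - 3) / ((s + 1) * K - 1)"
proof -
  have den: "(s + 1) * K - 1 > 0"
    using D_bound assms(1-3) by (smt (verit) mult_nonneg_nonneg)
  \<comment> \<open>the difference of the cross-multiplied sides is \<open>(K - 1) ((s + 1) K - 1 - D (s - 1))\<close>\<close>
  have "(K - 1) * (D * (s - 1)) \<le> (K - 1) * ((s + 1) * K - 1)"
    using D_bound assms(1) by (intro mult_left_mono) simp_all
  then have "(2 * D - K + 1) * ((s + 1) * K - 1) \<le> ((s + 3) * K + s - 3) * D"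
    by (simp add: algebra_simps)
  then show ?thesis using den assms(1,2) by (simp add: divide_simps)
qed

theorem proposition2:
  fixes s k s0 n d_c d_o :: nat and M :: real
  assumes "s \<ge> 2" and "k \<ge> 1" and "s0 < min k s"
    and "n = s * k + s0" and "d_c = n div s" and "d_o = (n - 1) div (s - 1)"
    and "M > 0"
  shows "gamma_cc M d_c s k s0 / gamma_MBR_o M k d_o
         \<le> 1 / (2 * (1 - exp (-1))) * (((real s + 3) * real k + real s - 3) / ((real s + 1) * real k - 1))"
proof -
  define c where "c = 1 - exp (-1::real)"
  have c: "c > 0" by (simp add: c_def)
  have "d_c = k" using assms(3-5) by simp
  have "k \<le> d_o" and "real (d_o * (s - 1) + 2) \<le> real ((s + 1) * k)"
    using d_o_bounds[of s s0 k] assms(1,3,4,6) by (simp_all only: of_nat_le_iff)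
  moreover have "real (s - 1) = real s - 1" using assms(1) by simp
  ultimately have k_le: "real k \<le> real d_o"
    and d_o_le: "real d_o * (real s - 1) + 2 \<le> (real s + 1) * real k"
    by (simp_all add: algebra_simps)
  have "real k ^ (s+1) * c \<le> real (cubic_m k s k s0)"
    unfolding c_def using assms(1) by (intro cubic_m_lower_bound) simp
  then have "real k ^ (s+1) / real (cubic_m k s k s0) \<le> 1 / c"
    using assms(2) c by (simp add: divide_simps mult.commute)
  then have "gamma_cc M d_c s k s0 / gamma_MBR_o M k d_o
      \<le> 1 / c * ((2 * real d_o - real k + 1) / (2 * real d_o))"
    unfolding \<open>d_c = k\<close> gamma_ratio_eq[OF less_imp_neq[OF assms(7), symmetric]]
    using k_le by (intro mult_right_mono) simp_all
  also have "\<dots> = 1 / (2 * c) * ((2 * real d_o - real k + 1) / real d_o)" by simp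
  also have "\<dots> \<le> 1 / (2 * c) * (((real s + 3) * real k + real s - 3) / ((real s + 1) * real k - 1))"
    using MBR_factor_le[OF _ k_le _ d_o_le] assms(1,2) c by (intro mult_left_mono) simp_all
  finally show ?thesis by (simp add: c_def)
qed

end
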